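(* Let $\Omega\subset\mathbb{R}^n$ be open, $\omega\in A_\infty$, and let $p:\Omega\to[1,\infty]$ be measurable such that $\frac1p$ satisfies the log-Hölder decay condition with limit exponent $p_\infty\in[1,\infty]$. Then there exists $\lambda\in(0,1)$ such that \[\int_\Omega\lambda^{1/\left|\frac1{p(x)}-\frac1{p_\infty}\right|}\,\omega(x)\,dx<\infty.\]
   Context: Convention $1/\infty:=0$ (and $\lambda^{1/0}:=0$ for $\lambda\in(0,1)$). $\frac1p$ satisfies the log-Hölder decay condition with $p_\infty$ if there is $c_2>0$ with $\big|\frac1{p(x)}-\frac1{p_\infty}\big|\le\frac{c_2}{\log(e+|x|)}$ for all $x\in\Omega$. A weight is a nonnegative locally integrable function $\omega$ on $\mathbb{R}^n$, $\omega(E):=\int_E\omega\,dx$. For $1<q<\infty$, $\omega\in A_q$ means $\sup_B|B|^{-q}\omega(B)\big(\int_B\omega^{-q'/q}dx\big)^{q-1}<\infty$ with $1/q+1/q'=1$, supremum over open balls; $\omega\in A_1$ means $M\omega\le C\omega$ a.e. ($M$ the Hardy–Littlewood maximal operator); $A_\infty:=\bigcup_{q\in[1,\infty)}A_q$. *)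

theory Defs
  imports "HOL-Analysis.Analysis"
begin

definition recip :: "ereal \<Rightarrow> real" where
  "recip p = (if p = \<infinity> then 0 else 1 / real_of_ereal p)"

definition lam_pow :: "real \<Rightarrow> real \<Rightarrow> real" where
  "lam_pow l t = (if t = 0 then 0 else l powr (1 / t))"

definition is_weight :: "('a::euclidean_space \<Rightarrow> real) \<Rightarrow> bool" where
  "is_weight w \<longleftrightarrow> (\<forall>x. 0 \<le> w x) \<and> w \<in> borel_measurable lebesgue \<and>
     (\<forall>K. compact K \<longrightarrow> set_integrable lebesgue K w)"

definition wmeas :: "('a::euclidean_space \<Rightarrow> real) \<Rightarrow> 'a set \<Rightarrow> real" where
  "wmeas w E = (LINT x:E|lebesgue. w x)"

definition maximal_op :: "('a::euclidean_space \<Rightarrow> real) \<Rightarrow> 'a \<Rightarrow> ennreal" where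
  "maximal_op f x = (SUP B \<in> {ball c r | c r. 0 < r \<and> x \<in> ball c r}.
       (\<integral>\<^sup>+ y. ennreal (indicator B y * \<bar>f y\<bar>) \<partial>lebesgue) / ennreal (measure lebesgue B))"

definition A1 :: "('a::euclidean_space \<Rightarrow> real) \<Rightarrow> bool" where
  "A1 w \<longleftrightarrow> is_weight w \<and>
     (\<exists>C::real. AE x in lebesgue. maximal_op w x \<le> ennreal C * ennreal (w x))"

text \<open>A_q class for 1 < q < \<infinity>: sup over open balls of
  |B|^(-q) w(B) (\<integral>_B w^(-q'/q))^(q-1) is finite, where q'/q = 1/(q-1).
  Negative powers of 0 are \<infinity>; balls with w(B)=0 contribute 0.\<close>
definition Aq :: "real \<Rightarrow> ('a::euclidean_space \<Rightarrow> real) \<Rightarrow> bool" where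
  "Aq q w \<longleftrightarrow> 1 < q \<and> is_weight w \<and>
     (\<exists>C::real. \<forall>c r. 0 < r \<longrightarrow>
        (let B = ball c r;
             I = (\<integral>\<^sup>+ y. (indicator B y *
                    (if w y = 0 then \<infinity> else ennreal (w y powr (- 1 / (q - 1))))) \<partial>lebesgue)
         in 0 < wmeas w B \<longrightarrow>
            I < \<infinity> \<and>
            measure lebesgue B powr (- q) * wmeas w B * enn2real I powr (q - 1) \<le> C))"

definition A_infty :: "('a::euclidean_space \<Rightarrow> real) \<Rightarrow> bool" where
  "A_infty w \<longleftrightarrow> A1 w \<or> (\<exists>q. 1 < q \<and> Aq q w)"

definition log_hoelder_decay :: "'a::euclidean_space set \<Rightarrow> ('a \<Rightarrow> ereal) \<Rightarrow> ereal \<Rightarrow> bool" where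
  "log_hoelder_decay \<Omega> p pinf \<longleftrightarrow>
     (\<exists>c2>0. \<forall>x\<in>\<Omega>. \<bar>recip (p x) - recip pinf\<bar> \<le> c2 / ln (exp 1 + norm x))"

end

theory Submission
  imports Defs
begin

(* An A_\<infinity> weight grows polynomially on balls about the origin: w(B(0,R)) \<le> A R^s for R \<ge> 1.
   For A_1 this follows by comparing the average of w over B(0,R) with w on B(0,1) through the
   maximal function; for A_q from the A_q condition together with the monotonicity of the dual
   weight integral of w^(-1/(q-1)) over balls.  With \<lambda> = exp(-c_2 (s+1)) the log-Hoelder decay
   condition gives \<lambda>^(1/|1/p(x) - 1/p_\<infinity>|) \<le> (e + |x|)^(-(s+1)), and summing over the dyadic
   balls B(0,2^k) shows that this decay beats the growth of w. *)

lemma measure_lebesgue_ball_conv_unit_ball: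
  fixes c :: "'a::euclidean_space"
  assumes "0 \<le> r"
  shows "measure lebesgue (ball c r) = r ^ DIM('a) * measure lebesgue (ball (0::'a) 1)"
  using content_ball_conv_unit_ball[OF assms, of c] by simp

lemma wmeas_nonneg:
  assumes "is_weight w"
  shows "0 \<le> wmeas w E"
  using assms unfolding wmeas_def set_lebesgue_integral_def is_weight_def
  by (intro integral_nonneg_AE) (simp add: indicator_def)

lemma nn_integral_weight_ball:
  assumes "is_weight w"
  shows "(\<integral>\<^sup>+x. ennreal (indicator (ball c r) x * w x) \<partial>lebesgue) = ennreal (wmeas w (ball c r))"
proof -
  have "set_integrable lebesgue (cball c r) w"
    using assms compact_cball unfolding is_weight_def by blast
  then have "set_integrable lebesgue (ball c r) w"
    by (rule set_integrable_subset) auto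
  then show ?thesis
    using assms unfolding wmeas_def set_lebesgue_integral_def set_integrable_def is_weight_def
    by (subst nn_integral_eq_integral) auto
qed

lemma maximal_op_ge_ball_average:
  assumes "0 < r" and "x \<in> ball c r"
  shows "(\<integral>\<^sup>+ y. ennreal (indicator (ball c r) y * \<bar>f y\<bar>) \<partial>lebesgue) / ennreal (measure lebesgue (ball c r))
    \<le> maximal_op f x"
  unfolding maximal_op_def using assms by (intro SUP_upper) blast

lemma ball_average_le_of_maximal_op_le:
  fixes w :: "'a::euclidean_space \<Rightarrow> real"
  assumes wt: "is_weight w" and "0 \<le> C"
    and maximal: "AE x in lebesgue. maximal_op w x \<le> ennreal C * ennreal (w x)"
    and r': "0 < r'" and sub: "ball c' r' \<subseteq> ball c r"
  shows "wmeas w (ball c r) / measure lebesgue (ball c r) * measure lebesgue (ball c' r')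
    \<le> C * wmeas w (ball c' r')"
proof -
  have [measurable]: "w \<in> borel_measurable lebesgue" "ball c' r' \<in> sets lebesgue"
    using wt unfolding is_weight_def by auto
  have r: "0 < r" using sub r' ball_subset_ball_iff[of c' r' c r] zero_le_dist[of c' c] by linarith
  define avg where "avg = wmeas w (ball c r) / measure lebesgue (ball c r)"
  have avg: "0 \<le> avg" unfolding avg_def using wmeas_nonneg[OF wt] by simp
  have avg_le: "ennreal avg \<le> maximal_op w x" if "x \<in> ball c' r'" for x
    using maximal_op_ge_ball_average[OF r subsetD[OF sub that], of w] nn_integral_weight_ball[OF wt, of c r]
      wt wmeas_nonneg[OF wt] r unfolding avg_def is_weight_def by (simp add: divide_ennreal)
  have "AE x in lebesgue. ennreal avg * indicator (ball c' r') x
      \<le> ennreal C * ennreal (indicator (ball c' r') x * w x)"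
    using maximal by eventually_elim (auto split: split_indicator intro: order_trans[OF avg_le])
  then have "(\<integral>\<^sup>+ x. ennreal avg * indicator (ball c' r') x \<partial>lebesgue)
      \<le> (\<integral>\<^sup>+ x. ennreal C * ennreal (indicator (ball c' r') x * w x) \<partial>lebesgue)"
    by (rule nn_integral_mono_AE)
  then have "ennreal avg * ennreal (measure lebesgue (ball c' r')) \<le> ennreal C * ennreal (wmeas w (ball c' r'))"
    by (subst (asm) nn_integral_cmult_indicator, simp, subst (asm) nn_integral_cmult)
      (simp_all add: emeasure_eq_measure2 nn_integral_weight_ball[OF wt])
  then show ?thesis
    using avg \<open>0 \<le> C\<close> wmeas_nonneg[OF wt] unfolding avg_def[symmetric]
    by (simp add: ennreal_mult'[symmetric] ennreal_le_iff)
qed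

definition has_polynomial_growth :: "('a::euclidean_space \<Rightarrow> real) \<Rightarrow> real \<Rightarrow> bool" where
  "has_polynomial_growth w s \<longleftrightarrow> (\<exists>A. \<forall>R\<ge>1. wmeas w (ball 0 R) \<le> A * R powr s)"

lemma A1_has_polynomial_growth:
  fixes w :: "'a::euclidean_space \<Rightarrow> real"
  assumes "A1 w"
  shows "has_polynomial_growth w DIM('a)"
proof -
  have wt: "is_weight w" using assms unfolding A1_def by blast
  obtain C0 where "AE x in lebesgue. maximal_op w x \<le> ennreal C0 * ennreal (w x)"
    using assms unfolding A1_def by blast
  moreover have "ennreal C0 = ennreal (max C0 0)"
    by (cases "C0 \<le> 0") (auto simp: ennreal_neg)
  ultimately have maximal: "AE x in lebesgue. maximal_op w x \<le> ennreal (max C0 0) * ennreal (w x)"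
    by simp
  define \<mu>1 where "\<mu>1 = measure lebesgue (ball (0::'a) 1)"
  have \<mu>1: "0 < \<mu>1" unfolding \<mu>1_def by simp
  have "wmeas w (ball 0 R) \<le> max C0 0 * wmeas w (ball 0 1) * R powr DIM('a)" if R: "1 \<le> R" for R
  proof -
    have "wmeas w (ball 0 R) / (R ^ DIM('a) * \<mu>1) * \<mu>1 \<le> max C0 0 * wmeas w (ball 0 1)"
      using ball_average_le_of_maximal_op_le[OF wt _ maximal, of 1 0 0 R] R
        measure_lebesgue_ball_conv_unit_ball[of R "0::'a"]
      unfolding \<mu>1_def by (simp add: subset_ball)
    then show ?thesis using \<mu>1 R by (simp add: powr_realpow field_simps)
  qed
  then show ?thesis unfolding has_polynomial_growth_def by blast
qed

definition dual_weight_integral :: "real \<Rightarrow> ('a::euclidean_space \<Rightarrow> real) \<Rightarrow> 'a set \<Rightarrow> ennreal" where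
  "dual_weight_integral q w B = (\<integral>\<^sup>+ y. indicator B y *
     (if w y = 0 then \<infinity> else ennreal (w y powr (- 1 / (q - 1)))) \<partial>lebesgue)"

lemma dual_weight_integral_mono:
  "A \<subseteq> B \<Longrightarrow> dual_weight_integral q w A \<le> dual_weight_integral q w B"
  unfolding dual_weight_integral_def by (intro nn_integral_mono) (auto split: split_indicator)

lemma dual_weight_integral_ball_pos:
  assumes [measurable]: "w \<in> borel_measurable lebesgue" and r: "0 < r"
  shows "0 < dual_weight_integral q w (ball c r)"
proof (rule ccontr)
  have [measurable]: "ball c r \<in> sets lebesgue" by simp
  assume "\<not> ?thesis"
  then have "dual_weight_integral q w (ball c r) = 0" by simp
  then have "AE y in lebesgue.
      indicator (ball c r) y * (if w y = 0 then \<infinity> else ennreal (w y powr (- 1 / (q - 1)))) = 0"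
    unfolding dual_weight_integral_def by (subst (asm) nn_integral_0_iff_AE) simp_all
  then have "AE y in lebesgue. y \<notin> ball c r"
    by eventually_elim (auto split: split_indicator if_splits)
  then have "emeasure lebesgue (ball c r) = 0"
    by (subst (asm) AE_iff_measurable[where N="ball c r"]) auto
  then show False using r by (simp add: emeasure_eq_measure2)
qed

lemma Aq_dual_weight_integral_ball_finite:
  assumes "Aq q w" and "0 < r" and "0 < wmeas w (ball c r)"
  shows "dual_weight_integral q w (ball c r) < \<infinity>"
  using assms unfolding Aq_def Let_def dual_weight_integral_def by auto

lemma Aq_ball_le:
  fixes w :: "'a::euclidean_space \<Rightarrow> real" and q :: real
  assumes "Aq q w"
  obtains C where "0 \<le> C"
    and "\<And>c r c' r'. 0 < r' \<Longrightarrow> ball c' r' \<subseteq> ball c r \<Longrightarrow>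
      wmeas w (ball c r) * enn2real (dual_weight_integral q w (ball c' r')) powr (q - 1)
        \<le> C * measure lebesgue (ball c r) powr q"
proof -
  have q: "1 < q" and wt: "is_weight w" using assms unfolding Aq_def by auto
  obtain C0 where C0: "\<And>c r. 0 < r \<Longrightarrow> 0 < wmeas w (ball c r) \<Longrightarrow>
      measure lebesgue (ball c r) powr (- q) * wmeas w (ball c r)
        * enn2real (dual_weight_integral q w (ball c r)) powr (q - 1) \<le> C0"
    using assms unfolding Aq_def Let_def dual_weight_integral_def by auto
  have "wmeas w (ball c r) * enn2real (dual_weight_integral q w (ball c' r')) powr (q - 1)
      \<le> max C0 0 * measure lebesgue (ball c r) powr q"
    if r': "0 < r'" and sub: "ball c' r' \<subseteq> ball c r" for c r c' r'
  proof (cases "0 < wmeas w (ball c r)")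
    case False
    then show ?thesis using wmeas_nonneg[OF wt, of "ball c r"] by simp
  next
    case True
    have r: "0 < r" using sub r' ball_subset_ball_iff[of c' r' c r] zero_le_dist[of c' c] by linarith
    define \<sigma> where "\<sigma> = enn2real (dual_weight_integral q w (ball c r))"
    have "enn2real (dual_weight_integral q w (ball c' r')) \<le> \<sigma>"
      unfolding \<sigma>_def using Aq_dual_weight_integral_ball_finite[OF assms r True]
      by (intro enn2real_mono dual_weight_integral_mono sub) auto
    then have "wmeas w (ball c r) * enn2real (dual_weight_integral q w (ball c' r')) powr (q - 1)
        \<le> wmeas w (ball c r) * \<sigma> powr (q - 1)"
      using True q by (intro mult_left_mono powr_mono2) auto
    also have "\<dots> \<le> C0 * measure lebesgue (ball c r) powr q"
      using C0[OF r True] r unfolding \<sigma>_def by (simp add: powr_minus field_simps)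
    also have "\<dots> \<le> max C0 0 * measure lebesgue (ball c r) powr q"
      by (intro mult_right_mono) auto
    finally show ?thesis .
  qed
  then show thesis by (intro that[of "max C0 0"]) auto
qed

lemma Aq_has_polynomial_growth:
  fixes w :: "'a::euclidean_space \<Rightarrow> real" and q :: real
  assumes "Aq q w"
  shows "has_polynomial_growth w (real DIM('a) * q)"
proof -
  have q: "1 < q" and wt: "is_weight w" using assms unfolding Aq_def by auto
  obtain C where "0 \<le> C" and C: "\<And>c r c' r'. 0 < r' \<Longrightarrow> ball c' r' \<subseteq> ball c r \<Longrightarrow>
      wmeas w (ball c r) * enn2real (dual_weight_integral q w (ball c' r')) powr (q - 1)
        \<le> C * measure lebesgue (ball c r) powr q"
    using Aq_ball_le[OF assms] by blast
  define \<mu>1 where "\<mu>1 = measure lebesgue (ball (0::'a) 1)"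
  define \<sigma>1 where "\<sigma>1 = enn2real (dual_weight_integral q w (ball (0::'a) 1))"
  have "wmeas w (ball 0 R) \<le> C * \<mu>1 powr q / \<sigma>1 powr (q - 1) * R powr (real DIM('a) * q)"
    if R: "1 \<le> R" for R
  proof (cases "0 < wmeas w (ball 0 R)")
    case False
    then show ?thesis using wmeas_nonneg[OF wt, of "ball 0 R"] \<open>0 \<le> C\<close> by simp
  next
    case True
    have "dual_weight_integral q w (ball (0::'a) 1) \<le> dual_weight_integral q w (ball 0 R)"
      using R by (intro dual_weight_integral_mono subset_ball)
    then have "0 < \<sigma>1"
      unfolding \<sigma>1_def using Aq_dual_weight_integral_ball_finite[OF assms _ True] R
        dual_weight_integral_ball_pos[of w 1 q 0] wt
      by (simp add: is_weight_def enn2real_positive_iff)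
    have "wmeas w (ball 0 R) * \<sigma>1 powr (q - 1) \<le> C * measure lebesgue (ball (0::'a) R) powr q"
      unfolding \<sigma>1_def using R by (intro C subset_ball) auto
    also have "measure lebesgue (ball (0::'a) R) powr q = R powr (real DIM('a) * q) * \<mu>1 powr q"
      using R measure_lebesgue_ball_conv_unit_ball[of R "0::'a"] unfolding \<mu>1_def
      by (simp add: powr_mult powr_realpow[symmetric] powr_powr)
    finally show ?thesis using \<open>0 < \<sigma>1\<close> by (simp add: field_simps)
  qed
  then show ?thesis unfolding has_polynomial_growth_def by blast
qed

lemma A_infty_has_polynomial_growth:
  fixes w :: "'a::euclidean_space \<Rightarrow> real"
  assumes "A_infty w"
  obtains s where "0 \<le> s" and "has_polynomial_growth w s"
proof -
  consider "A1 w" | q where "1 < q" "Aq q w"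
    using assms unfolding A_infty_def by blast
  then show thesis
  proof cases
    case 1
    show ?thesis by (rule that[OF _ A1_has_polynomial_growth[OF 1]]) simp
  next
    case 2
    show ?thesis by (rule that[OF _ Aq_has_polynomial_growth[OF 2(2)]]) (use 2(1) in simp)
  qed
qed

lemma exists_power_of_two_bracket:
  fixes a :: real
  assumes "0 \<le> a"
  obtains k :: nat where "a < 2 ^ k" and "2 ^ k \<le> 2 * a + 1"
proof -
  define k where "k = (LEAST k::nat. a < 2 ^ k)"
  have "\<exists>k::nat. a < 2 ^ k" using real_arch_pow[of 2 a] by auto
  then have "a < 2 ^ k" unfolding k_def by (rule LeastI_ex)
  moreover have "2 ^ k \<le> 2 * a + 1"
  proof (cases k)
    case 0
    then show ?thesis using assms by simp
  next
    case (Suc j)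
    then have "\<not> a < 2 ^ j" unfolding k_def using not_less_Least[of j "\<lambda>k. a < 2 ^ k"] by simp
    then show ?thesis using Suc by simp
  qed
  ultimately show thesis using that by blast
qed

lemma powr_decay_le_dyadic_sum:
  fixes x :: "'a::real_normed_vector"
  assumes "0 \<le> N" and "0 \<le> v"
  shows "ennreal ((exp 1 + norm x) powr - N * v)
    \<le> (\<Sum>k. ennreal ((2 ^ k / 2) powr - N) * ennreal (indicator (ball 0 (2 ^ k)) x * v))"
proof -
  obtain k :: nat where k: "norm x < 2 ^ k" "2 ^ k \<le> 2 * norm x + 1"
    using exists_power_of_two_bracket[OF norm_ge_zero] .
  have "2 ^ k / 2 \<le> exp 1 + norm x"
    using k(2) exp_ge_add_one_self[of 1] by simp
  then have "(exp 1 + norm x) powr - N \<le> (2 ^ k / 2) powr - N"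
    using assms by (intro powr_mono2') auto
  then have "ennreal ((exp 1 + norm x) powr - N * v)
      \<le> ennreal ((2 ^ k / 2) powr - N) * ennreal (indicator (ball 0 (2 ^ k)) x * v)"
    using k(1) assms(2) by (simp add: ennreal_mult[symmetric] ennreal_leI mult_right_mono)
  also have "\<dots> \<le> (\<Sum>k. ennreal ((2 ^ k / 2) powr - N) * ennreal (indicator (ball 0 (2 ^ k)) x * v))"
    using sum_le_suminf[OF summableI, of "{k}"] by simp
  finally show ?thesis .
qed

lemma nn_integral_weight_times_decay_finite:
  fixes w :: "'a::euclidean_space \<Rightarrow> real"
  assumes wt: "is_weight w" and growth: "has_polynomial_growth w s" and "0 \<le> s" "s < N"
  shows "(\<integral>\<^sup>+x. ennreal ((exp 1 + norm x) powr - N * w x) \<partial>lebesgue) < \<infinity>"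
proof -
  have [measurable]: "w \<in> borel_measurable lebesgue" and wnn: "\<And>x. 0 \<le> w x"
    using wt unfolding is_weight_def by auto
  have [measurable]: "\<And>R. ball (0::'a) R \<in> sets lebesgue" by simp
  obtain A where A: "\<And>R. 1 \<le> R \<Longrightarrow> wmeas w (ball 0 R) \<le> A * R powr s"
    using growth unfolding has_polynomial_growth_def by blast
  have "0 \<le> A" using A[of 1] wmeas_nonneg[OF wt, of "ball 0 1"] by simp
  have "0 \<le> N" using \<open>0 \<le> s\<close> \<open>s < N\<close> by simp
  define c where "c k = (2 ^ k / 2) powr - N" for k :: nat
  define \<rho> where "\<rho> = 2 powr (s - N)"
  have "ennreal ((exp 1 + norm x) powr - N * w x)
      \<le> (\<Sum>k. ennreal (c k) * ennreal (indicator (ball 0 (2 ^ k)) x * w x))" for x :: 'a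
    unfolding c_def using \<open>0 \<le> N\<close> wnn by (rule powr_decay_le_dyadic_sum)
  then have "(\<integral>\<^sup>+x. ennreal ((exp 1 + norm x) powr - N * w x) \<partial>lebesgue)
      \<le> (\<integral>\<^sup>+x. (\<Sum>k. ennreal (c k) * ennreal (indicator (ball 0 (2 ^ k)) x * w x)) \<partial>lebesgue)"
    by (intro nn_integral_mono)
  also have "\<dots> = (\<Sum>k. ennreal (c k) * ennreal (wmeas w (ball (0::'a) (2 ^ k))))"
    by (subst nn_integral_suminf) (measurable, simp add: nn_integral_cmult nn_integral_weight_ball[OF wt])
  also have "\<dots> \<le> (\<Sum>k. ennreal (A * 2 powr N * \<rho> ^ k))"
  proof (intro suminf_le allI)
    fix k :: nat
    have "c k * (2 ^ k) powr s = 2 powr N * \<rho> ^ k"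
      unfolding c_def \<rho>_def
      by (simp add: powr_divide powr_minus powr_realpow[symmetric] powr_powr powr_diff field_simps)
    moreover have "c k * wmeas w (ball 0 (2 ^ k)) \<le> c k * (A * (2 ^ k) powr s)"
      unfolding c_def using A[of "2 ^ k"] by (intro mult_left_mono) auto
    ultimately show "ennreal (c k) * ennreal (wmeas w (ball 0 (2 ^ k))) \<le> ennreal (A * 2 powr N * \<rho> ^ k)"
      unfolding c_def using wmeas_nonneg[OF wt] by (simp add: ennreal_mult[symmetric] ennreal_leI mult_ac)
  qed auto
  also have "\<dots> < \<infinity>"
  proof -
    have "\<rho> < 1" unfolding \<rho>_def using \<open>s < N\<close> powr_less_mono[of "s - N" 0 2] by simp
    then have "summable (\<lambda>k. A * 2 powr N * \<rho> ^ k)"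
      unfolding \<rho>_def by (intro summable_mult summable_geometric) simp
    then show ?thesis
      using \<open>0 \<le> A\<close> by (simp add: ennreal_suminf_neq_top less_top[symmetric] \<rho>_def)
  qed
  finally show ?thesis .
qed

lemma lam_pow_exp_le_powr:
  assumes "0 \<le> d" and "1 < t" and "0 \<le> N" and "d \<le> c / ln t"
  shows "lam_pow (exp (- c * N)) d \<le> t powr - N"
proof (cases "d = 0")
  case True
  then show ?thesis unfolding lam_pow_def by simp
next
  case False
  with assms have "0 < d" "0 < ln t" by auto
  then have "ln t \<le> c / d" using assms(4) by (simp add: field_simps)
  then have "N * ln t \<le> N * (c / d)" using \<open>0 \<le> N\<close> by (rule mult_left_mono)
  then have "- c * N / d \<le> - N * ln t" by (simp add: mult.commute)
  then show ?thesis using False \<open>1 < t\<close> unfolding lam_pow_def powr_def by simp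
qed

theorem lemma5p6:
  fixes \<Omega> :: "'a::euclidean_space set"
    and w :: "'a \<Rightarrow> real"
    and p :: "'a \<Rightarrow> ereal"
    and pinf :: ereal
  assumes "open \<Omega>"
    and "A_infty w"
    and "p \<in> borel_measurable (restrict_space lebesgue \<Omega>)"
    and "\<forall>x\<in>\<Omega>. 1 \<le> p x"
    and "1 \<le> pinf"
    and "log_hoelder_decay \<Omega> p pinf"
  shows "\<exists>l. 0 < l \<and> l < 1 \<and>
     (\<integral>\<^sup>+ x. ennreal (indicator \<Omega> x * lam_pow l \<bar>recip (p x) - recip pinf\<bar> * w x) \<partial>lebesgue) < \<infinity>"
proof -
  have wt: "is_weight w" using assms(2) unfolding A_infty_def A1_def Aq_def by auto
  obtain c2 where "0 < c2" and c2: "\<And>x. x \<in> \<Omega> \<Longrightarrow> \<bar>recip (p x) - recip pinf\<bar> \<le> c2 / ln (exp 1 + norm x)"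
    using assms(6) unfolding log_hoelder_decay_def by blast
  obtain s where "0 \<le> s" and growth: "has_polynomial_growth w s"
    using A_infty_has_polynomial_growth[OF assms(2)] .
  define N where "N = s + 1"
  define l where "l = exp (- c2 * N)"
  have "0 < l" "l < 1" unfolding l_def N_def using \<open>0 < c2\<close> \<open>0 \<le> s\<close> by auto
  have "(\<integral>\<^sup>+ x. ennreal (indicator \<Omega> x * lam_pow l \<bar>recip (p x) - recip pinf\<bar> * w x) \<partial>lebesgue)
      \<le> (\<integral>\<^sup>+ x. ennreal ((exp 1 + norm x) powr - N * w x) \<partial>lebesgue)"
  proof (intro nn_integral_mono ennreal_leI mult_right_mono)
    fix x :: 'a
    have "1 < exp 1 + norm x" using exp_gt_one[of 1] norm_ge_zero[of x] by linarith
    then have "lam_pow l \<bar>recip (p x) - recip pinf\<bar> \<le> (exp 1 + norm x) powr - N" if "x \<in> \<Omega>"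
      unfolding l_def using c2[OF that] \<open>0 \<le> s\<close> N_def by (intro lam_pow_exp_le_powr) auto
    then show "indicator \<Omega> x * lam_pow l \<bar>recip (p x) - recip pinf\<bar> \<le> (exp 1 + norm x) powr - N"
      by (simp split: split_indicator)
    show "0 \<le> w x" using wt unfolding is_weight_def by simp
  qed
  also have "\<dots> < \<infinity>"
    by (rule nn_integral_weight_times_decay_finite[OF wt growth \<open>0 \<le> s\<close>]) (simp add: N_def)
  finally show ?thesis using \<open>0 < l\<close> \<open>l < 1\<close> by blast
qed

end
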